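(* Let $v\ge2$. Then an optimum $(d,3)$-CDA$((d+1)v^3;4,v)$ exists for every positive integer $d$ with $d+1\le v$.
   Context: Consecutive $t$-way interaction in an $N\times k$ array $A=(a_{ij})$ over a $v$-set $V$: $T=\{(i,x_i),\dots,(i+t-1,x_{i+t-1})\}$, $1\le i\le k-t+1$, $x_r\in V$; $\rho(A,T)=\{r: a_{r,j}=x_j\ \forall (j,x_j)\in T\}$, $\rho(A,\mathcal T)=\bigcup_{T\in\mathcal T}\rho(A,T)$. A $(d,t)$-CDA$(N;k,v)$ is an $N\times k$ array over $V$ in which every $t$ consecutive columns contain every $t$-tuple at least once, and such that for every set $\mathcal T$ of exactly $d$ distinct consecutive $t$-way interactions and every consecutive $t$-way interaction $T$: $\rho(A,T)\subseteq\rho(A,\mathcal T)$ iff $T\in\mathcal T$. It is optimum if $N=(d+1)v^t$. *)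

theory Defs
  imports Main
begin

text \<open>An N x k array over the v-set V = {0..<v}: rows 0..<N, columns 0..<k
  (column c here is column c+1 of the paper). Entry in row r, column c is A r c.\<close>

definition is_array :: "nat \<Rightarrow> nat \<Rightarrow> nat \<Rightarrow> (nat \<Rightarrow> nat \<Rightarrow> nat) \<Rightarrow> bool" where
  "is_array N k v A \<longleftrightarrow> (\<forall>r<N. \<forall>c<k. A r c < v)"

definition consec_interactions :: "nat \<Rightarrow> nat \<Rightarrow> nat \<Rightarrow> (nat \<times> nat) set set" where
  "consec_interactions k t v =
     {T. \<exists>i x. i + t \<le> k \<and> (\<forall>j<t. x j < v) \<and> T = {(i + j, x j) | j. j < t}}"

definition rho :: "nat \<Rightarrow> (nat \<Rightarrow> nat \<Rightarrow> nat) \<Rightarrow> (nat \<times> nat) set \<Rightarrow> nat set" where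
  "rho N A T = {r. r < N \<and> (\<forall>(j, y)\<in>T. A r j = y)}"

definition rho_set :: "nat \<Rightarrow> (nat \<Rightarrow> nat \<Rightarrow> nat) \<Rightarrow> (nat \<times> nat) set set \<Rightarrow> nat set" where
  "rho_set N A \<T> = (\<Union>T\<in>\<T>. rho N A T)"

definition consec_covering :: "nat \<Rightarrow> nat \<Rightarrow> nat \<Rightarrow> nat \<Rightarrow> (nat \<Rightarrow> nat \<Rightarrow> nat) \<Rightarrow> bool" where
  "consec_covering t N k v A \<longleftrightarrow>
     (\<forall>i x. i + t \<le> k \<longrightarrow> (\<forall>j<t. x j < v) \<longrightarrow> (\<exists>r<N. \<forall>j<t. A r (i + j) = x j))"

definition is_CDA :: "nat \<Rightarrow> nat \<Rightarrow> nat \<Rightarrow> nat \<Rightarrow> nat \<Rightarrow> (nat \<Rightarrow> nat \<Rightarrow> nat) \<Rightarrow> bool" where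
  "is_CDA d t N k v A \<longleftrightarrow>
     is_array N k v A \<and> consec_covering t N k v A \<and>
     (\<forall>\<T> T. \<T> \<subseteq> consec_interactions k t v \<longrightarrow> card \<T> = d \<longrightarrow>
        T \<in> consec_interactions k t v \<longrightarrow>
        (rho N A T \<subseteq> rho_set N A \<T> \<longleftrightarrow> T \<in> \<T>))"

end

theory Submission
  imports Defs "HOL-Number_Theory.Cong"
begin

text \<open>Index the rows by \<open>(s, a, b, c)\<close> with \<open>s \<le> d\<close> and \<open>a, b, c \<in> V\<close>, and let the row be
  \<open>(a, b, c, a + s mod v)\<close>. Each consecutive 3-way interaction then lies in exactly \<open>d + 1\<close> rows,
  one for each \<open>s\<close>. Two distinct interactions share at most one row: if they start in the same
  column they already differ on their common columns, and otherwise together they fix all four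
  entries \<open>a, b, c, a + s\<close> of a row, which determine \<open>s\<close> because \<open>s \<le> d < v\<close>. Consequently, if
  the \<open>d + 1\<close> rows of an interaction \<open>T \<notin> \<T>\<close> were covered by the rows of \<open>\<T>\<close>, each member of
  \<open>\<T>\<close> would cover at most one of them, forcing \<open>|\<T>| > d\<close>.\<close>

lemma finite_consec_interactions: "finite (consec_interactions k t v)"
proof (rule finite_subset)
  show "consec_interactions k t v \<subseteq> Pow ({..<k} \<times> {..<v})"
    unfolding consec_interactions_def by force
qed simp

lemma rho_interaction:
  "rho N A {(i + j, x j) | j. j < t} = {r. r < N \<and> (\<forall>j<t. A r (i + j) = x j)}"
  unfolding rho_def by auto

lemma finite_rho: "finite (rho N A T)"
  unfolding rho_def by simp

lemma consec_covering_if_rho_nonempty: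
  assumes "\<And>T. T \<in> consec_interactions k t v \<Longrightarrow> rho N A T \<noteq> {}"
  shows "consec_covering t N k v A"
  unfolding consec_covering_def
proof (intro allI impI)
  fix i x assume "i + t \<le> k" "\<forall>j<t. x j < v"
  then have "{(i + j, x j) | j. j < t} \<in> consec_interactions k t v"
    unfolding consec_interactions_def by blast
  then show "\<exists>r<N. \<forall>j<t. A r (i + j) = x j"
    using assms by (fastforce simp: rho_interaction)
qed

lemma card_rho_le_card_if_covered:
  assumes "finite \<T>" "rho N A T \<subseteq> rho_set N A \<T>"
    and "\<And>T'. T' \<in> \<T> \<Longrightarrow> card (rho N A T \<inter> rho N A T') \<le> 1"
  shows "card (rho N A T) \<le> card \<T>"
proof -
  have "rho N A T = (\<Union>T'\<in>\<T>. rho N A T \<inter> rho N A T')"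
    using assms(2) unfolding rho_set_def by blast
  then have "card (rho N A T) \<le> (\<Sum>T'\<in>\<T>. card (rho N A T \<inter> rho N A T'))"
    using card_UN_le[OF assms(1)] by metis
  also have "\<dots> \<le> (\<Sum>T'\<in>\<T>. 1)"
    using assms(3) by (rule sum_mono)
  finally show ?thesis by simp
qed

lemma is_CDA_if_large_rho_small_overlap:
  assumes "is_array N k v A"
    and large: "\<And>T. T \<in> consec_interactions k t v \<Longrightarrow> d < card (rho N A T)"
    and overlap: "\<And>T T'. T \<in> consec_interactions k t v \<Longrightarrow> T' \<in> consec_interactions k t v \<Longrightarrow>
      T \<noteq> T' \<Longrightarrow> card (rho N A T \<inter> rho N A T') \<le> 1"
  shows "is_CDA d t N k v A"
  unfolding is_CDA_def
proof (intro conjI allI impI)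
  show "consec_covering t N k v A"
    using large by (intro consec_covering_if_rho_nonempty) fastforce
next
  fix \<T> T
  assume sub: "\<T> \<subseteq> consec_interactions k t v" and "card \<T> = d"
    and T: "T \<in> consec_interactions k t v"
  have "finite \<T>"
    using sub finite_consec_interactions by (rule finite_subset)
  show "rho N A T \<subseteq> rho_set N A \<T> \<longleftrightarrow> T \<in> \<T>"
  proof
    assume covered: "rho N A T \<subseteq> rho_set N A \<T>"
    show "T \<in> \<T>"
    proof (rule ccontr)
      assume "T \<notin> \<T>"
      then have "card (rho N A T) \<le> card \<T>"
        using \<open>finite \<T>\<close> covered overlap T sub by (intro card_rho_le_card_if_covered) blast+
      then show False
        using large[OF T] \<open>card \<T> = d\<close> by simp
    qed
  qed (auto simp: rho_set_def)
qed fact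

definition row_code :: "nat \<Rightarrow> nat \<Rightarrow> nat \<Rightarrow> nat \<Rightarrow> nat \<Rightarrow> nat" where
  "row_code v s a b c = c + v * (b + v * (a + v * s))"

text \<open>Row \<open>row_code v s a b c\<close>, i.e. the row with base-\<open>v\<close> digits \<open>s, a, b, c\<close>, is \<open>(a, b, c, a + s mod v)\<close>.\<close>

definition cda_array :: "nat \<Rightarrow> nat \<Rightarrow> nat \<Rightarrow> nat" where
  "cda_array v r col =
     (if col = 0 then r div v div v mod v
      else if col = 1 then r div v mod v
      else if col = 2 then r mod v
      else (r div v div v mod v + r div v div v div v) mod v)"

lemma digit_bound: "(c::nat) < v \<Longrightarrow> y < w \<Longrightarrow> c + v * y < v * w"
proof -
  assume "c < v" "y < w"
  then have "c + v * y < v * (y + 1)" by simp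
  also have "\<dots> \<le> v * w" using \<open>y < w\<close> by (intro mult_le_mono2) simp
  finally show ?thesis .
qed

lemma row_code_less:
  assumes "a < v" "b < v" "c < v" "s \<le> d"
  shows "row_code v s a b c < (d + 1) * v ^ 3"
proof -
  have "c + v * (b + v * (a + v * s)) < v * (v * (v * (d + 1)))"
    using assms by (intro digit_bound) auto
  then show ?thesis
    unfolding row_code_def by (simp add: power3_eq_cube mult_ac)
qed

lemma row_code_digits:
  assumes "a < v" "b < v" "c < v"
  shows "row_code v s a b c mod v = c" "row_code v s a b c div v mod v = b"
    "row_code v s a b c div v div v mod v = a" "row_code v s a b c div v div v div v = s"
  using assms by (simp_all add: row_code_def)

lemma row_code_of_digits:
  "r = row_code v (r div v div v div v) (r div v div v mod v) (r div v mod v) (r mod v)"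
  unfolding row_code_def by simp

lemma cda_array_row_code:
  assumes "a < v" "b < v" "c < v"
  shows "cda_array v (row_code v s a b c) 0 = a" "cda_array v (row_code v s a b c) 1 = b"
    "cda_array v (row_code v s a b c) 2 = c"
    "cda_array v (row_code v s a b c) 3 = (a + s) mod v"
  using row_code_digits[OF assms] by (simp_all add: cda_array_def)

lemma top_digit_le:
  fixes r d v :: nat
  assumes "r < (d + 1) * v ^ 3"
  shows "r div v div v div v \<le> d"
proof -
  have "r div v div v div v = r div v ^ 3"
    by (metis div_mult2_eq power3_eq_cube)
  also have "\<dots> < d + 1"
    using assms by (rule less_mult_imp_div_less)
  finally show ?thesis by simp
qed

lemma cda_array_rows_inj:
  assumes "d < v" "r < (d + 1) * v ^ 3" "r' < (d + 1) * v ^ 3"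
    and same: "\<forall>col<4. cda_array v r col = cda_array v r' col"
  shows "r = r'"
proof -
  have a: "r div v div v mod v = r' div v div v mod v"
    and b: "r div v mod v = r' div v mod v"
    and c: "r mod v = r' mod v"
    using same[rule_format, of 0] same[rule_format, of 1] same[rule_format, of 2]
    by (simp_all add: cda_array_def)
  have "[r div v div v mod v + r div v div v div v = r div v div v mod v + r' div v div v div v] (mod v)"
    using same[rule_format, of 3] a by (simp add: cda_array_def cong_def)
  moreover have "r div v div v div v < v" "r' div v div v div v < v"
    using top_digit_le[OF assms(2)] top_digit_le[OF assms(3)] assms(1) by auto
  ultimately have s: "r div v div v div v = r' div v div v div v"
    by (simp add: cong_add_lcancel_nat cong_less_modulus_unique_nat)
  show ?thesis
    using row_code_of_digits[of r v] row_code_of_digits[of r' v] a b c s by metis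
qed

lemma ex_row_code_matching_interaction:
  assumes "d < v" "s \<le> d" "i \<le> 1" "\<forall>j<3. x j < v"
  shows "\<exists>a b c. a < v \<and> b < v \<and> c < v \<and> (\<forall>j<3. cda_array v (row_code v s a b c) (i + j) = x j)"
proof -
  have x: "x 0 < v" "x 1 < v" "x 2 < v"
    using assms(4) by simp_all
  have j: "j < 3 \<longleftrightarrow> j = 0 \<or> j = 1 \<or> j = 2" for j :: nat
    by auto
  consider "i = 0" | "i = 1"
    using assms(3) by linarith
  then show ?thesis
  proof cases
    case 1
    then show ?thesis
      using x cda_array_row_code[OF x] by (metis add_0 j)
  next
    case 2
    define a where "a = (x 2 + (v - s)) mod v"
    have a: "a < v"
      using x by (simp add: a_def)
    have "x 2 + (v - s) + s = x 2 + v"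
      using assms(1,2) by simp
    then have "(a + s) mod v = x 2"
      using x by (metis a_def mod_add_left_eq mod_add_self2 mod_less)
    then have "cda_array v (row_code v s a (x 0) (x 1)) (i + j) = x j" if "j < 3" for j
      using that cda_array_row_code[OF a x(1,2)] 2 j[of j] by (auto simp: numeral_2_eq_2 numeral_3_eq_3)
    then show ?thesis
      using a x by blast
  qed
qed

lemma d_less_card_rho_cda_array:
  assumes "d < v" "T \<in> consec_interactions 4 3 v"
  shows "d < card (rho ((d + 1) * v ^ 3) (cda_array v) T)"
proof -
  let ?N = "(d + 1) * v ^ 3"
  obtain i x where i: "i \<le> 1" and x: "\<forall>j<3. x j < v" and T: "T = {(i + j, x j) | j. j < 3}"
    using assms(2) unfolding consec_interactions_def by force
  obtain a b c where abc: "\<And>s. s \<le> d \<Longrightarrow> a s < v \<and> b s < v \<and> c s < v \<and>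
      (\<forall>j<3. cda_array v (row_code v s (a s) (b s) (c s)) (i + j) = x j)"
    using ex_row_code_matching_interaction[OF assms(1) _ i x] by metis
  define g where "g s = row_code v s (a s) (b s) (c s)" for s
  have "inj_on g {..d}"
  proof (rule inj_onI)
    fix s s' assume "s \<in> {..d}" "s' \<in> {..d}" "g s = g s'"
    then show "s = s'"
      using abc row_code_digits(4) unfolding g_def by (metis atMost_iff)
  qed
  moreover have "g ` {..d} \<subseteq> rho ?N (cda_array v) T"
    using abc row_code_less by (auto simp: T rho_interaction g_def)
  ultimately have "card {..d} \<le> card (rho ?N (cda_array v) T)"
    using card_inj_on_le finite_rho by blast
  then show ?thesis by simp
qed

lemma card_rho_inter_cda_array_le_1:
  assumes "d < v" "T \<in> consec_interactions 4 3 v" "T' \<in> consec_interactions 4 3 v" "T \<noteq> T'"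
  shows "card (rho ((d + 1) * v ^ 3) (cda_array v) T \<inter> rho ((d + 1) * v ^ 3) (cda_array v) T') \<le> 1"
proof -
  let ?N = "(d + 1) * v ^ 3"
  obtain i x where i: "i \<le> 1" and T: "T = {(i + j, x j) | j. j < 3}"
    using assms(2) unfolding consec_interactions_def by force
  obtain i' x' where i': "i' \<le> 1" and T': "T' = {(i' + j, x' j) | j. j < 3}"
    using assms(3) unfolding consec_interactions_def by force
  have "r = r'"
    if r: "r \<in> rho ?N (cda_array v) T \<inter> rho ?N (cda_array v) T'"
    and r': "r' \<in> rho ?N (cda_array v) T \<inter> rho ?N (cda_array v) T'" for r r'
  proof (cases "i = i'")
    case True
    have "x j = x' j" if "j < 3" for j
      using r that unfolding T T' True rho_interaction by auto
    then have "T = T'"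
      by (auto simp: T T' True)
    then show ?thesis using assms(4) by simp
  next
    case False
    then have cols: "col < 4 \<Longrightarrow> (\<exists>j<3. col = i + j) \<or> (\<exists>j<3. col = i' + j)" for col
      using i i' by presburger
    have "\<forall>col<4. cda_array v r col = cda_array v r' col"
      using r r' cols by (fastforce simp: T T' rho_interaction)
    then show ?thesis
      using cda_array_rows_inj assms(1) r r' by (simp add: T rho_interaction)
  qed
  then show ?thesis
    using card_le_Suc0_iff_eq[of "rho ?N (cda_array v) T \<inter> rho ?N (cda_array v) T'"] finite_rho
    by (simp add: finite_Int)
qed

theorem mainTheorem15:
  fixes v d :: nat
  assumes "v \<ge> 2" and "d \<ge> 1" and "d + 1 \<le> v"
  shows "\<exists>A. is_CDA d 3 ((d + 1) * v ^ 3) 4 v A"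
proof
  have "d < v" using assms(3) by simp
  have "is_array ((d + 1) * v ^ 3) 4 v (cda_array v)"
    using assms(1) by (simp add: is_array_def cda_array_def)
  then show "is_CDA d 3 ((d + 1) * v ^ 3) 4 v (cda_array v)"
    using d_less_card_rho_cda_array card_rho_inter_cda_array_le_1 \<open>d < v\<close>
    by (intro is_CDA_if_large_rho_small_overlap)
qed

end
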